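(* Let $G=(V,E)$ be a graph of order $n$ such that $\frac{n}{2}<\tau(G)=\tau=n-k$, and let $W$ be its $\tau$-set. If $G[W]\cong K_\tau$, then $\beta_p(G)\le n-\frac{k}{2}$.
   Context: All graphs are finite, simple, undirected and connected. Two vertices $u,v$ are twins if $N(u)\setminus\{v\}=N(v)\setminus\{u\}$; twin classes are the equivalence classes of this relation, and the twin number $\tau(G)$ is the maximum cardinality of a twin class. A $\tau$-set is a set of pairwise twin vertices of cardinality $\tau(G)$. For a partition $\Pi=\{S_1,\dots,S_k\}$ of $V(G)$, $r(u|\Pi)=(d(u,S_1),\dots,d(u,S_k))$ with $d(u,S)=\min_{w\in S}d(u,w)$; $\Pi$ is locating if $r(u|\Pi)\ne r(v|\Pi)$ for all distinct $u,v$; $\beta_p(G)$ is the minimum size of a locating partition. *)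

theory Defs
  imports Complex_Main "HOL-Library.Disjoint_Sets"
begin

definition graph :: "'a set \<Rightarrow> ('a \<Rightarrow> 'a \<Rightarrow> bool) \<Rightarrow> bool" where
  "graph V E \<longleftrightarrow> finite V \<and> V \<noteq> {} \<and>
     (\<forall>u v. E u v \<longrightarrow> u \<in> V \<and> v \<in> V) \<and>
     (\<forall>u v. E u v \<longrightarrow> E v u) \<and> (\<forall>u. \<not> E u u)"

definition edge_rel :: "('a \<Rightarrow> 'a \<Rightarrow> bool) \<Rightarrow> ('a \<times> 'a) set" where
  "edge_rel E = {(u, v). E u v}"

definition connected_graph :: "'a set \<Rightarrow> ('a \<Rightarrow> 'a \<Rightarrow> bool) \<Rightarrow> bool" where
  "connected_graph V E \<longleftrightarrow> graph V E \<and>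
     (\<forall>u\<in>V. \<forall>v\<in>V. (u, v) \<in> (edge_rel E)\<^sup>*)"

definition dist :: "('a \<Rightarrow> 'a \<Rightarrow> bool) \<Rightarrow> 'a \<Rightarrow> 'a \<Rightarrow> nat" where
  "dist E u v = (LEAST k. (u, v) \<in> (edge_rel E) ^^ k)"

definition setdist :: "('a \<Rightarrow> 'a \<Rightarrow> bool) \<Rightarrow> 'a \<Rightarrow> 'a set \<Rightarrow> nat" where
  "setdist E u S = Min (dist E u ` S)"

definition nbhd :: "'a set \<Rightarrow> ('a \<Rightarrow> 'a \<Rightarrow> bool) \<Rightarrow> 'a \<Rightarrow> 'a set" where
  "nbhd V E u = {w \<in> V. E u w}"

definition twins :: "'a set \<Rightarrow> ('a \<Rightarrow> 'a \<Rightarrow> bool) \<Rightarrow> 'a \<Rightarrow> 'a \<Rightarrow> bool" where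
  "twins V E u v \<longleftrightarrow> u \<in> V \<and> v \<in> V \<and> nbhd V E u - {v} = nbhd V E v - {u}"

definition twin_class :: "'a set \<Rightarrow> ('a \<Rightarrow> 'a \<Rightarrow> bool) \<Rightarrow> 'a \<Rightarrow> 'a set" where
  "twin_class V E u = {v \<in> V. twins V E u v}"

definition twin_number :: "'a set \<Rightarrow> ('a \<Rightarrow> 'a \<Rightarrow> bool) \<Rightarrow> nat" where
  "twin_number V E = Max ((\<lambda>u. card (twin_class V E u)) ` V)"

definition tau_set :: "'a set \<Rightarrow> ('a \<Rightarrow> 'a \<Rightarrow> bool) \<Rightarrow> 'a set \<Rightarrow> bool" where
  "tau_set V E W \<longleftrightarrow> W \<subseteq> V \<and> (\<forall>u\<in>W. \<forall>v\<in>W. twins V E u v) \<and>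
     card W = twin_number V E"

text \<open>Locating partition (the order of the parts is irrelevant for locating-ness).\<close>
definition locating_partition :: "'a set \<Rightarrow> ('a \<Rightarrow> 'a \<Rightarrow> bool) \<Rightarrow> 'a set set \<Rightarrow> bool" where
  "locating_partition V E P \<longleftrightarrow> partition_on V P \<and>
     (\<forall>u\<in>V. \<forall>v\<in>V. u \<noteq> v \<longrightarrow> (\<exists>S\<in>P. setdist E u S \<noteq> setdist E v S))"

definition partition_dimension :: "'a set \<Rightarrow> ('a \<Rightarrow> 'a \<Rightarrow> bool) \<Rightarrow> nat" where
  "partition_dimension V E = (LEAST k. \<exists>P. locating_partition V E P \<and> card P = k)"

definition induces_complete :: "('a \<Rightarrow> 'a \<Rightarrow> bool) \<Rightarrow> 'a set \<Rightarrow> bool" where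
  "induces_complete E W \<longleftrightarrow> (\<forall>u\<in>W. \<forall>v\<in>W. u \<noteq> v \<longrightarrow> E u v)"

end

theory Submission
  imports Defs
begin

text \<open>Let \<open>U = V - W\<close>, so \<open>|U| = k < \<tau>\<close>. Pair some vertices of \<open>U\<close> injectively with vertices of the
  clique \<open>W\<close> and make every other vertex a singleton part; a pair is located as soon as some
  singleton is adjacent to exactly one of its members. A vertex of \<open>U\<close> missing some vertex of \<open>W\<close>
  misses all of \<open>W\<close> (twins), so it is separated from its partner by a vertex of \<open>W\<close> left
  unpaired, which exists since \<open>k < \<tau>\<close>. A vertex \<open>u \<in> U\<close> seeing all of \<open>W\<close> is not a twin of
  \<open>W\<close> (maximality of \<open>\<tau>\<close>), so some other \<open>z \<in> U\<close> separates \<open>u\<close> from \<open>W\<close>. Choosing the singletons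
  in \<open>U\<close> as a dominating set for this separation relation, Ore's argument (the complement of a
  minimal dominating set dominates) lets us keep at most \<open>k/2\<close> of them, so at least \<open>k/2\<close>
  vertices get paired and at most \<open>n - k/2\<close> parts remain.\<close>

lemma graph_edge_in_vertices: "graph V E \<Longrightarrow> E u v \<Longrightarrow> u \<in> V \<and> v \<in> V"
  unfolding graph_def by blast

lemma graph_edge_sym: "graph V E \<Longrightarrow> E u v \<longleftrightarrow> E v u"
  unfolding graph_def by blast

lemma graph_edge_irrefl: "graph V E \<Longrightarrow> \<not> E u u"
  unfolding graph_def by blast

lemma connected_graph_walk_exists:
  assumes "connected_graph V E" "u \<in> V" "v \<in> V"
  shows "\<exists>k. (u, v) \<in> edge_rel E ^^ k"
  using assms unfolding connected_graph_def by (simp add: rtrancl_power)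

lemma connected_graph_dist_walk:
  assumes "connected_graph V E" "u \<in> V" "v \<in> V"
  shows "(u, v) \<in> edge_rel E ^^ dist E u v"
  unfolding dist_def using connected_graph_walk_exists[OF assms] by (rule LeastI_ex)

lemma dist_eq_0_iff:
  assumes "connected_graph V E" "u \<in> V" "v \<in> V"
  shows "dist E u v = 0 \<longleftrightarrow> u = v"
proof
  assume "dist E u v = 0"
  then show "u = v" using connected_graph_dist_walk[OF assms] by simp
next
  assume "u = v"
  then have "(u, v) \<in> edge_rel E ^^ 0" by simp
  then show "dist E u v = 0" unfolding dist_def by (metis Least_le le_zero_eq)
qed

lemma dist_eq_1_iff:
  assumes "connected_graph V E" "u \<in> V" "v \<in> V"
  shows "dist E u v = 1 \<longleftrightarrow> E u v"
proof
  assume "dist E u v = 1"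
  then show "E u v" using connected_graph_dist_walk[OF assms] by (simp add: edge_rel_def)
next
  assume e: "E u v"
  have "u \<noteq> v" using e assms(1) unfolding connected_graph_def graph_def by auto
  then have "dist E u v \<noteq> 0" using dist_eq_0_iff[OF assms] by simp
  moreover have "(u, v) \<in> edge_rel E ^^ 1" using e by (simp add: edge_rel_def)
  then have "dist E u v \<le> 1" unfolding dist_def by (rule Least_le)
  ultimately show "dist E u v = 1" by simp
qed

lemma setdist_eq_0_iff:
  assumes "connected_graph V E" "x \<in> V" "finite S" "S \<noteq> {}" "S \<subseteq> V"
  shows "setdist E x S = 0 \<longleftrightarrow> x \<in> S"
proof -
  have "setdist E x S = 0 \<longleftrightarrow> 0 \<in> dist E x ` S"
    unfolding setdist_def using assms(3,4) by (metis Min_in Min_le finite_imageI image_is_empty le_zero_eq)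
  also have "\<dots> \<longleftrightarrow> x \<in> S"
    using dist_eq_0_iff[OF assms(1,2)] assms(5) by (auto simp: image_iff)
  finally show ?thesis .
qed

lemma setdist_singleton: "setdist E x {z} = dist E x z"
  by (simp add: setdist_def)

text \<open>Parts of a partition are told apart by distance 0; two vertices inside a part are told
  apart by a singleton part adjacent to exactly one of them (distance 1 versus not 1).\<close>
lemma locating_partitionI_singleton_separators:
  assumes cg: "connected_graph V E" and part: "partition_on V P"
    and sep: "\<And>S x y. S \<in> P \<Longrightarrow> x \<in> S \<Longrightarrow> y \<in> S \<Longrightarrow> x \<noteq> y \<Longrightarrow> \<exists>z. {z} \<in> P \<and> E x z \<noteq> E y z"
  shows "locating_partition V E P"
  unfolding locating_partition_def
proof (intro conjI ballI impI part)
  fix x y assume x: "x \<in> V" and y: "y \<in> V" and xy: "x \<noteq> y"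
  have finV: "finite V" using cg unfolding connected_graph_def graph_def by simp
  obtain S where S: "S \<in> P" "x \<in> S" using part x unfolding partition_on_def by blast
  have SV: "S \<subseteq> V" using S(1) part unfolding partition_on_def by blast
  show "\<exists>S\<in>P. setdist E x S \<noteq> setdist E y S"
  proof (cases "y \<in> S")
    case False
    have "finite S" "S \<noteq> {}" using S SV finite_subset[OF SV finV] by auto
    then have "setdist E x S = 0" "setdist E y S \<noteq> 0"
      using S(2) False SV setdist_eq_0_iff[OF cg x] setdist_eq_0_iff[OF cg y] by auto
    then show ?thesis using S(1) by metis
  next
    case True
    then obtain z where z: "{z} \<in> P" "E x z \<noteq> E y z" using sep S xy by blast
    have "z \<in> V" using z(1) part unfolding partition_on_def by blast
    then have "dist E x z \<noteq> dist E y z"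
      using z(2) dist_eq_1_iff[OF cg x] dist_eq_1_iff[OF cg y] by metis
    then have "setdist E x {z} \<noteq> setdist E y {z}" by (simp add: setdist_singleton)
    then show ?thesis using z(1) by blast
  qed
qed

lemma partition_dimension_le_card:
  "locating_partition V E P \<Longrightarrow> partition_dimension V E \<le> card P"
  unfolding partition_dimension_def by (rule Least_le) blast

definition pair_partition :: "'a set \<Rightarrow> 'a set \<Rightarrow> ('a \<Rightarrow> 'a) \<Rightarrow> 'a set set" where
  "pair_partition V M f = (\<lambda>u. {u, f u}) ` M \<union> (\<lambda>x. {x}) ` (V - M - f ` M)"

lemma partition_on_pair_partition:
  assumes "M \<subseteq> V" "f ` M \<subseteq> V" "inj_on f M" "M \<inter> f ` M = {}"
  shows "partition_on V (pair_partition V M f)"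
  unfolding partition_on_def pair_partition_def disjoint_def
  using assms by (auto simp: inj_on_eq_iff doubleton_eq_iff)

lemma card_pair_partition:
  assumes "finite V" "M \<subseteq> V" "f ` M \<subseteq> V" "inj_on f M" "M \<inter> f ` M = {}"
  shows "card (pair_partition V M f) = card V - card M"
proof -
  have finM: "finite M" using assms(1,2) finite_subset by blast
  have pairs: "card ((\<lambda>u. {u, f u}) ` M) = card M"
    using assms(4,5) by (intro card_image inj_onI) (auto simp: doubleton_eq_iff inj_on_eq_iff)
  have "card (M \<union> f ` M) = 2 * card M"
    using assms(4,5) finM by (simp add: card_Un_disjoint card_image)
  moreover have "V - M - f ` M = V - (M \<union> f ` M)" by blast
  ultimately have singletons: "card ((\<lambda>x. {x}) ` (V - M - f ` M)) = card V - 2 * card M"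
    using assms(1-3) finM by (simp add: card_image card_Diff_subset)
  have "card V \<ge> 2 * card M"
    using \<open>card (M \<union> f ` M) = 2 * card M\<close> assms(1-3) by (metis card_mono le_sup_iff)
  moreover have "(\<lambda>u. {u, f u}) ` M \<inter> (\<lambda>x. {x}) ` (V - M - f ` M) = {}"
    by (auto simp: doubleton_eq_iff)
  ultimately show ?thesis
    unfolding pair_partition_def using finM assms(1) pairs singletons
    by (simp add: card_Un_disjoint)
qed

lemma locating_pair_partition:
  assumes cg: "connected_graph V E"
    and "M \<subseteq> V" "f ` M \<subseteq> V" "inj_on f M" "M \<inter> f ` M = {}"
    and sep: "\<And>u. u \<in> M \<Longrightarrow> \<exists>z\<in>V - M - f ` M. E u z \<noteq> E (f u) z"
  shows "locating_partition V E (pair_partition V M f)"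
proof (rule locating_partitionI_singleton_separators[OF cg partition_on_pair_partition[OF assms(2-5)]])
  fix S x y assume "S \<in> pair_partition V M f" "x \<in> S" "y \<in> S" "x \<noteq> y"
  then obtain u where u: "u \<in> M" "{x, y} = {u, f u}"
    unfolding pair_partition_def by auto
  then obtain z where "z \<in> V - M - f ` M" "E u z \<noteq> E (f u) z" using sep by blast
  moreover from this have "{z} \<in> pair_partition V M f" unfolding pair_partition_def by blast
  ultimately show "\<exists>z. {z} \<in> pair_partition V M f \<and> E x z \<noteq> E y z"
    using u(2) by (auto simp: doubleton_eq_iff)
qed

definition dominates :: "('a \<Rightarrow> 'a \<Rightarrow> bool) \<Rightarrow> 'a set \<Rightarrow> 'a set \<Rightarrow> bool" where
  "dominates R A D \<longleftrightarrow> (\<forall>u\<in>A - D. \<exists>z\<in>D. R u z)"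

text \<open>Ore's argument: if a vertex \<open>u \<in> D\<close> had no \<open>R\<close>-neighbour outside \<open>D\<close>, then \<open>D - {u}\<close>
  would still dominate, contradicting minimality.\<close>
lemma dominates_Diff_minimal:
  assumes "finite U" "A \<subseteq> U" "D \<subseteq> U" "dominates R A D"
    and min: "\<And>D'. D' \<subseteq> U \<Longrightarrow> dominates R A D' \<Longrightarrow> card D \<le> card D'"
    and nbr: "\<And>u. u \<in> A \<Longrightarrow> \<exists>z\<in>U - {u}. R u z"
    and sym: "\<And>u z. u \<in> A \<Longrightarrow> z \<in> A \<Longrightarrow> R u z \<Longrightarrow> R z u"
  shows "dominates R A (U - D)"
  unfolding dominates_def
proof
  fix u assume "u \<in> A - (U - D)"
  then have uA: "u \<in> A" and uD: "u \<in> D" using assms(2) by auto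
  show "\<exists>z\<in>U - D. R u z"
  proof (rule ccontr)
    assume none: "\<not> (\<exists>z\<in>U - D. R u z)"
    have "dominates R A (D - {u})"
      unfolding dominates_def
    proof
      fix v assume v: "v \<in> A - (D - {u})"
      show "\<exists>z\<in>D - {u}. R v z"
      proof (cases "v = u")
        case True
        then show ?thesis using nbr[OF uA] none by blast
      next
        case False
        then obtain z where z: "z \<in> D" "R v z"
          using v \<open>dominates R A D\<close> unfolding dominates_def by blast
        have "z \<noteq> u" using sym[OF _ uA] z(2) none v False assms(2) by blast
        then show ?thesis using z by blast
      qed
    qed
    then have "card D \<le> card (D - {u})" using assms(3) by (intro min) auto
    moreover have "card (D - {u}) < card D"
      using uD assms(1,3) by (meson card_Diff1_less finite_subset)
    ultimately show False by simp
  qed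
qed

lemma obtain_half_size_dominating_set:
  assumes "finite U" "A \<subseteq> U"
    and "\<And>u. u \<in> A \<Longrightarrow> \<exists>z\<in>U - {u}. R u z"
    and "\<And>u z. u \<in> A \<Longrightarrow> z \<in> A \<Longrightarrow> R u z \<Longrightarrow> R z u"
  obtains T where "T \<subseteq> U" "2 * card T \<le> card U" "dominates R A T"
proof -
  have "U \<subseteq> U \<and> dominates R A U" using assms(2) by (auto simp: dominates_def)
  then obtain D where D: "D \<subseteq> U" "dominates R A D"
    and min: "\<And>D'. D' \<subseteq> U \<and> dominates R A D' \<Longrightarrow> card D \<le> card D'"
    using ex_has_least_nat[of "\<lambda>D. D \<subseteq> U \<and> dominates R A D" U card] by blast
  have "dominates R A (U - D)"
    using assms D min by (intro dominates_Diff_minimal) auto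
  moreover have "card D + card (U - D) = card U"
    using D(1) assms(1) by (metis card_Diff_subset card_mono finite_subset le_add_diff_inverse)
  ultimately show ?thesis
    using that[of D] that[of "U - D"] D by (cases "card D \<le> card (U - D)") auto
qed

lemma twins_adj_eq:
  assumes "graph V E" "twins V E w w'" "z \<noteq> w" "z \<noteq> w'"
  shows "E w z = E w' z"
proof -
  have "nbhd V E w - {w'} = nbhd V E w' - {w}" using assms(2) unfolding twins_def by blast
  then show ?thesis
    using assms(3,4) graph_edge_in_vertices[OF assms(1)] unfolding nbhd_def by blast
qed

lemma tau_set_no_outside_twin:
  assumes "graph V E" "tau_set V E W" "w \<in> W" "u \<in> V - W"
  shows "\<not> twins V E w u"
proof
  assume tw: "twins V E w u"
  have finV: "finite V" using assms(1) unfolding graph_def by simp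
  have WV: "W \<subseteq> V" and twW: "\<forall>x\<in>W. \<forall>y\<in>W. twins V E x y" and cardW: "card W = twin_number V E"
    using assms(2) unfolding tau_set_def by auto
  have "insert u W \<subseteq> twin_class V E w"
    using tw twW assms(3,4) WV unfolding twin_class_def by auto
  then have "card (insert u W) \<le> card (twin_class V E w)"
    using finV by (intro card_mono) (auto simp: twin_class_def)
  also have "\<dots> \<le> twin_number V E"
    unfolding twin_number_def using finV assms(3) WV by (intro Max_ge) auto
  finally show False
    using cardW assms(4) finite_subset[OF WV finV] by simp
qed

text \<open>A vertex adjacent to the whole complete \<open>\<tau>\<close>-set is not a twin of its members, and the
  vertex separating them cannot lie in the \<open>\<tau>\<close>-set, which both see completely.\<close>
lemma complete_tau_set_separator:
  assumes gr: "graph V E" "tau_set V E W" "induces_complete E W"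
    and "w \<in> W" "u \<in> V - W" "\<forall>w'\<in>W. E u w'"
  shows "\<exists>z\<in>V - W - {u}. E u z \<noteq> E w z"
proof -
  have "W \<subseteq> V" using assms(2) unfolding tau_set_def by simp
  then have "nbhd V E w - {u} \<noteq> nbhd V E u - {w}"
    using tau_set_no_outside_twin[OF assms(1,2,4,5)] assms(4,5) unfolding twins_def by auto
  then obtain z where z: "z \<in> V" "z \<noteq> u" "z \<noteq> w" "E u z \<noteq> E w z"
    unfolding nbhd_def using graph_edge_irrefl[OF gr(1)] by blast
  have "z \<notin> W"
    using z assms(3,4,6) graph_edge_sym[OF gr(1)] unfolding induces_complete_def by metis
  then show ?thesis using z by blast
qed

lemma complete_tau_set_half_dominating:
  assumes gr: "graph V E" and W: "tau_set V E W" "induces_complete E W" "w\<^sub>1 \<in> W"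
  obtains T where "T \<subseteq> V - W" "2 * card T \<le> card (V - W)"
    and "\<And>u. u \<in> V - W - T \<Longrightarrow> \<forall>w\<in>W. E u w \<Longrightarrow> \<exists>z\<in>T. E u z \<noteq> E w\<^sub>1 z"
proof -
  define A where "A = {u \<in> V - W. \<forall>w\<in>W. E u w}"
  define R where "R = (\<lambda>u z. E u z \<noteq> E w\<^sub>1 z)"
  have finU: "finite (V - W)" using gr unfolding graph_def by simp
  have AU: "A \<subseteq> V - W" unfolding A_def by blast
  have nbr: "\<exists>z\<in>V - W - {u}. R u z" if "u \<in> A" for u
    unfolding R_def using that by (intro complete_tau_set_separator[OF gr W]) (auto simp: A_def)
  have sym: "R z u" if "u \<in> A" "z \<in> A" "R u z" for u z
    using that W(3) graph_edge_sym[OF gr, of u z] graph_edge_sym[OF gr, of u w\<^sub>1]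
      graph_edge_sym[OF gr, of z w\<^sub>1] unfolding A_def R_def by auto
  obtain T where T: "T \<subseteq> V - W" "2 * card T \<le> card (V - W)" "dominates R A T"
    using obtain_half_size_dominating_set[of "V - W" A R] finU AU nbr sym by blast
  moreover have "\<exists>z\<in>T. E u z \<noteq> E w\<^sub>1 z" if "u \<in> V - W - T" "\<forall>w\<in>W. E u w" for u
  proof -
    have "u \<in> A - T" using that unfolding A_def by blast
    then show ?thesis using T(3) unfolding dominates_def R_def by blast
  qed
  ultimately show ?thesis using that by blast
qed

text \<open>Pair the vertices of \<open>M\<close> injectively with members of the twin clique \<open>W\<close>, leaving one
  member \<open>w\<^sub>0\<close> unpaired. A vertex not adjacent to all of \<open>W\<close> misses \<open>w\<^sub>0\<close> while its partner sees it.\<close>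
lemma partition_dimension_le_pairing_twin_clique:
  assumes cg: "connected_graph V E"
    and W: "W \<subseteq> V" "induces_complete E W" "\<forall>w\<in>W. \<forall>w'\<in>W. twins V E w w'" "w\<^sub>1 \<in> W"
    and M: "M \<subseteq> V - W" "card M < card W"
    and sep: "\<And>u. u \<in> M \<Longrightarrow> \<forall>w\<in>W. E u w \<Longrightarrow> \<exists>z\<in>V - W - M. E u z \<noteq> E w\<^sub>1 z"
  shows "partition_dimension V E \<le> card V - card M"
proof -
  have gr: "graph V E" using cg unfolding connected_graph_def by simp
  have finV: "finite V" using gr unfolding graph_def by simp
  have finW: "finite W" using finite_subset[OF W(1) finV] .
  have finM: "finite M" using M(1) finV by (meson Diff_subset finite_subset subset_trans)
  obtain f where f: "f ` M \<subseteq> W" "inj_on f M"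
    using card_le_inj[OF finM finW] M(2) by auto
  have "card (f ` M) < card W" using M(2) card_image[OF f(2)] by simp
  then have "f ` M \<noteq> W" by blast
  then obtain w\<^sub>0 where w\<^sub>0: "w\<^sub>0 \<in> W" "w\<^sub>0 \<notin> f ` M" using f(1) by blast
  have fM: "f ` M \<subseteq> V" "M \<subseteq> V" "M \<inter> f ` M = {}" using f(1) W(1) M(1) by auto
  have "\<exists>z\<in>V - M - f ` M. E u z \<noteq> E (f u) z" if u: "u \<in> M" for u
  proof (cases "\<forall>w\<in>W. E u w")
    case True
    then obtain z where z: "z \<in> V - W - M" "E u z \<noteq> E w\<^sub>1 z" using sep u by blast
    moreover have "E w\<^sub>1 z = E (f u) z"
      using z(1) f(1) u W(3,4) by (intro twins_adj_eq[OF gr]) auto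
    ultimately show ?thesis using f(1) by blast
  next
    case False
    then obtain w where w: "w \<in> W" "\<not> E u w" by blast
    have "E w u = E w\<^sub>0 u" using u M(1) w(1) w\<^sub>0(1) W(3) by (intro twins_adj_eq[OF gr]) auto
    then have "\<not> E u w\<^sub>0" using w(2) graph_edge_sym[OF gr] by metis
    moreover have "E (f u) w\<^sub>0"
      using W(2) f(1) u w\<^sub>0 unfolding induces_complete_def by (metis image_eqI image_subset_iff)
    moreover have "w\<^sub>0 \<in> V - M - f ` M" using w\<^sub>0 W(1) M(1) by auto
    ultimately show ?thesis by blast
  qed
  then have "locating_partition V E (pair_partition V M f)"
    using fM f(2) by (intro locating_pair_partition[OF cg]) auto
  then show ?thesis
    using partition_dimension_le_card card_pair_partition[OF finV fM(2,1) f(2) fM(3)] by metis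
qed

theorem theorem16:
  fixes V :: "'a set" and E :: "'a \<Rightarrow> 'a \<Rightarrow> bool" and W :: "'a set" and n k :: nat
  assumes "connected_graph V E"
    and "n = card V"
    and "real n / 2 < real (twin_number V E)"
    and "twin_number V E = n - k"
    and "tau_set V E W"
    and "induces_complete E W"
  shows "real (partition_dimension V E) \<le> real n - real k / 2"
proof -
  have gr: "graph V E" using assms(1) unfolding connected_graph_def by simp
  have finV: "finite V" using gr unfolding graph_def by simp
  have WV: "W \<subseteq> V" and twW: "\<forall>w\<in>W. \<forall>w'\<in>W. twins V E w w'" and cardW: "card W = n - k"
    using assms(4,5) unfolding tau_set_def by auto
  have k_lt: "k < card W" and cardU: "card (V - W) = k"
    using assms(2-4) cardW card_Diff_subset[OF finite_subset[OF WV finV] WV] by auto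
  then obtain w\<^sub>1 where w\<^sub>1: "w\<^sub>1 \<in> W" by fastforce
  obtain T where T: "T \<subseteq> V - W" "2 * card T \<le> card (V - W)"
    and sep: "\<And>u. u \<in> V - W - T \<Longrightarrow> \<forall>w\<in>W. E u w \<Longrightarrow> \<exists>z\<in>T. E u z \<noteq> E w\<^sub>1 z"
    using complete_tau_set_half_dominating[OF gr assms(5,6) w\<^sub>1] by blast
  have "card (V - W - T) < card W"
    using k_lt cardU card_mono[OF finite_Diff[OF finV] Diff_subset[of "V - W" T]] by simp
  then have "partition_dimension V E \<le> card V - card (V - W - T)"
    using partition_dimension_le_pairing_twin_clique[OF assms(1) WV assms(6) twW w\<^sub>1 Diff_subset]
      sep T(1) by (metis Diff_Diff_Int inf.absorb_iff2)
  moreover have "card (V - W - T) = k - card T"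
    using T(1) cardU finV by (simp add: card_Diff_subset finite_subset)
  moreover have "k \<le> n" using assms(2) cardU card_mono[OF finV Diff_subset[of V W]] by simp
  ultimately show ?thesis using T(2) cardU assms(2) by (simp add: of_nat_diff)
qed

end
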